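(* Let $G$ be a connected graph with $n\ge 13$ vertices and maximum degree $\Delta=\Delta(G)$. Suppose one of the following holds: (1) $n/2\le \Delta\le n-4$ and $e(G)=n+k$ for some $1\le k\le 10$; (2) $\Delta=n-3$ and $e(G)=n+k$ for some $1\le k\le 7$; (3) $\Delta=n-2$ and $e(G)=n+k$ for some $1\le k\le 4$. Then $\frac{q(G)}{R(G)}<\frac{n}{\sqrt{n-1}}$.
   Context: All graphs are finite and simple; $e(G)$ is the number of edges and $\Delta(G)$ the maximum degree. For a vertex $u$, $d(u)$ is its degree. The Randić index is $R(G)=\sum_{\{u,v\}\in E(G)} \frac{1}{\sqrt{d(u)d(v)}}$. The signless Laplacian is $Q=D+A$ ($D$ the diagonal degree matrix, $A$ the adjacency matrix), and $q(G)$ is its largest eigenvalue. *)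

theory Defs
  imports "HOL-Analysis.Analysis"
begin

definition simple_graph :: "'a set \<Rightarrow> ('a \<Rightarrow> 'a \<Rightarrow> bool) \<Rightarrow> bool" where
  "simple_graph V E \<longleftrightarrow> finite V \<and> (\<forall>u v. E u v \<longrightarrow> u \<in> V \<and> v \<in> V)
     \<and> (\<forall>u v. E u v \<longrightarrow> E v u) \<and> (\<forall>u. \<not> E u u)"

definition connected_graph :: "'a set \<Rightarrow> ('a \<Rightarrow> 'a \<Rightarrow> bool) \<Rightarrow> bool" where
  "connected_graph V E \<longleftrightarrow> V \<noteq> {} \<and> (\<forall>u\<in>V. \<forall>v\<in>V. E\<^sup>*\<^sup>* u v)"

definition degree :: "'a set \<Rightarrow> ('a \<Rightarrow> 'a \<Rightarrow> bool) \<Rightarrow> 'a \<Rightarrow> nat" where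
  "degree V E u = card {v \<in> V. E u v}"

definition max_degree :: "'a set \<Rightarrow> ('a \<Rightarrow> 'a \<Rightarrow> bool) \<Rightarrow> nat" where
  "max_degree V E = Max (degree V E ` V)"

definition edge_set :: "'a set \<Rightarrow> ('a \<Rightarrow> 'a \<Rightarrow> bool) \<Rightarrow> 'a set set" where
  "edge_set V E = {{u, v} | u v. u \<in> V \<and> v \<in> V \<and> E u v}"

definition num_edges :: "'a set \<Rightarrow> ('a \<Rightarrow> 'a \<Rightarrow> bool) \<Rightarrow> nat" where
  "num_edges V E = card (edge_set V E)"

definition randic :: "'a set \<Rightarrow> ('a \<Rightarrow> 'a \<Rightarrow> bool) \<Rightarrow> real" where
  "randic V E = (\<Sum>e\<in>edge_set V E. 1 / sqrt (\<Prod>w\<in>e. real (degree V E w)))"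

definition signless_laplacian :: "'a set \<Rightarrow> ('a \<Rightarrow> 'a \<Rightarrow> bool) \<Rightarrow> 'a \<Rightarrow> 'a \<Rightarrow> real" where
  "signless_laplacian V E u v =
     (if u = v then real (degree V E u) else 0) + (if E u v then 1 else 0)"

definition is_eigenvalue :: "'a set \<Rightarrow> ('a \<Rightarrow> 'a \<Rightarrow> real) \<Rightarrow> real \<Rightarrow> bool" where
  "is_eigenvalue V M mu \<longleftrightarrow> (\<exists>x :: 'a \<Rightarrow> real. (\<exists>u\<in>V. x u \<noteq> 0) \<and>
      (\<forall>u\<in>V. (\<Sum>v\<in>V. M u v * x v) = mu * x u))"

text \<open>q(G): largest eigenvalue of the signless Laplacian (symmetric, so all eigenvalues are real).\<close>
definition signless_spectral_radius :: "'a set \<Rightarrow> ('a \<Rightarrow> 'a \<Rightarrow> bool) \<Rightarrow> real" where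
  "signless_spectral_radius V E = Max {mu. is_eigenvalue V (signless_laplacian V E) mu}"

end

theory Submission
  imports Defs "Jordan_Normal_Form.Spectral_Radius"
begin

text \<open>
  Numerator and denominator are estimated separately. Write \<open>s(u)\<close> for the sum of the
  degrees of the neighbours of \<open>u\<close>. Rescaling an eigenvector \<open>x\<close> of \<open>Q\<close> by the degrees and
  looking at a vertex \<open>u\<close> where \<open>|x(u)|/d(u)\<close> is maximal gives
  \<open>q(G) \<le> max\<^sub>u (d(u)\<^sup>2 + s(u))/d(u)\<close>. Each hypothesis provides \<open>c \<ge> 2\<close> with \<open>\<Delta> \<le> n - c\<close>
  and \<open>2e - n + 1 \<le> c(n - c)\<close>, and then \<open>d(u)\<^sup>2 + s(u) \<le> n d(u)\<close> at every vertex: if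
  \<open>d(u) \<le> n - \<Delta>\<close> because \<open>s(u) \<le> d(u) \<Delta>\<close>, and otherwise because \<open>c \<le> d(u) \<le> n - c\<close> gives
  \<open>d(u) (n - d(u)) \<ge> c(n - c) \<ge> 2e - n + 1 \<ge> s(u)\<close>, the last step since no vertex is isolated.
  Hence \<open>q(G) \<le> n\<close>. For the Randic index, bounding every edge weight at \<open>u\<close> by
  \<open>1/\<surd>(d(u) \<Delta>)\<close> and using \<open>t + 1/t \<ge> 2\<close> at the neighbours of a vertex of maximum degree
  gives \<open>2R(G) \<ge> (n - 1 + \<Delta>)/\<surd>\<Delta>\<close>, which exceeds \<open>2\<surd>(n - 1)\<close> because \<open>\<Delta> \<noteq> n - 1\<close>.
\<close>

section \<open>Real eigenvalues of symmetric matrices\<close>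

lemma symmetric_form_eigenvalue_real:
  fixes a :: "'i \<Rightarrow> 'i \<Rightarrow> real" and x :: "'i \<Rightarrow> complex"
  assumes fin: "finite I" and sym: "\<And>i j. a i j = a j i"
    and eig: "\<And>i. i \<in> I \<Longrightarrow> (\<Sum>j\<in>I. of_real (a i j) * x j) = \<mu> * x i"
    and nz: "i0 \<in> I" "x i0 \<noteq> 0"
  shows "Im \<mu> = 0"
proof -
  define S where "S = (\<Sum>i\<in>I. \<Sum>j\<in>I. cnj (x i) * of_real (a i j) * x j)"
  define N where "N = (\<Sum>i\<in>I. (cmod (x i))\<^sup>2)"
  have "S = (\<Sum>i\<in>I. cnj (x i) * (\<mu> * x i))"
    unfolding S_def by (simp add: eig mult.assoc flip: sum_distrib_left)
  also have "\<dots> = \<mu> * of_real N"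
    unfolding N_def of_real_sum complex_norm_square by (simp add: sum_distrib_left mult_ac)
  finally have S: "S = \<mu> * of_real N" .
  have "cnj S = (\<Sum>i\<in>I. \<Sum>j\<in>I. x i * of_real (a j i) * cnj (x j))"
    unfolding S_def by (simp add: sym mult_ac)
  also have "\<dots> = S"
    unfolding S_def by (subst sum.swap) (simp add: mult_ac)
  finally have "cnj S = S" .
  then have "cnj \<mu> * of_real N = \<mu> * of_real N"
    using S by (metis complex_cnj_complex_of_real complex_cnj_mult)
  moreover have "N > 0"
    unfolding N_def using fin nz by (intro sum_pos2[of _ i0]) auto
  ultimately have "cnj \<mu> = \<mu>" by simp
  then show ?thesis by (simp add: complex_eq_iff)
qed

lemma mat_mult_vec_reindex:
  fixes M :: "'a \<Rightarrow> 'a \<Rightarrow> 'b::comm_semiring_0"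
  assumes f: "bij_betw f {0..<n} V" and i: "i < n"
  shows "(mat n n (\<lambda>(i, j). M (f i) (f j)) *\<^sub>v vec n (\<lambda>j. x (f j))) $ i
           = (\<Sum>v\<in>V. M (f i) v * x v)"
  using i by (simp add: scalar_prod_def) (rule sum.reindex_bij_betw[OF f])

lemma eigenvector_imp_mat_eigenvalue:
  fixes M :: "'a \<Rightarrow> 'a \<Rightarrow> 'b::field"
  assumes f: "bij_betw f {0..<n} V" and u0: "u0 \<in> V" "x u0 \<noteq> 0"
    and eig: "\<And>u. u \<in> V \<Longrightarrow> (\<Sum>v\<in>V. M u v * x v) = \<mu> * x u"
  shows "eigenvalue (mat n n (\<lambda>(i, j). M (f i) (f j))) \<mu>"
    (is "eigenvalue ?A \<mu>")
proof -
  define w where "w = vec n (\<lambda>j. x (f j))"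
  have f_in: "f i \<in> V" if "i < n" for i
    using f that by (auto simp: bij_betw_def)
  have "?A *\<^sub>v w = \<mu> \<cdot>\<^sub>v w"
  proof (rule eq_vecI)
    fix i assume "i < dim_vec (\<mu> \<cdot>\<^sub>v w)"
    then have i: "i < n" by (simp add: w_def)
    have "(?A *\<^sub>v w) $ i = (\<Sum>v\<in>V. M (f i) v * x v)"
      unfolding w_def by (rule mat_mult_vec_reindex[OF f i])
    also have "\<dots> = (\<mu> \<cdot>\<^sub>v w) $ i"
      using eig[OF f_in[OF i]] i by (simp add: w_def)
    finally show "(?A *\<^sub>v w) $ i = (\<mu> \<cdot>\<^sub>v w) $ i" .
  qed (simp add: w_def)
  moreover obtain i where "i < n" "f i = u0"
    using u0(1) bij_betw_imp_surj_on[OF f] by force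
  then have "w \<noteq> 0\<^sub>v n"
    using u0(2) by (metis index_vec index_zero_vec(1) w_def)
  ultimately show ?thesis
    unfolding eigenvalue_def eigenvector_def by (intro exI[of _ w]) (simp add: w_def)
qed

lemma mat_eigenvalue_imp_eigenvector:
  fixes M :: "'a \<Rightarrow> 'a \<Rightarrow> 'b::field"
  assumes f: "bij_betw f {0..<n} V" and "eigenvalue (mat n n (\<lambda>(i, j). M (f i) (f j))) \<mu>"
  obtains x u0 where "u0 \<in> V" "x u0 \<noteq> 0" "\<And>u. u \<in> V \<Longrightarrow> (\<Sum>v\<in>V. M u v * x v) = \<mu> * x u"
proof -
  let ?A = "mat n n (\<lambda>(i, j). M (f i) (f j))"
  define g where "g = inv_into {0..<n} f"
  have g_in: "g u < n" "f (g u) = u" if "u \<in> V" for u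
    using f that unfolding g_def
    by (metis atLeastLessThan_iff bij_betw_imp_surj_on bij_betw_inv_into_right inv_into_into)+
  have g_f: "g (f i) = i" if "i < n" for i
    using f that unfolding g_def by (simp add: bij_betw_inv_into_left)
  from assms(2) obtain w where w: "w \<in> carrier_vec n" "w \<noteq> 0\<^sub>v n" "?A *\<^sub>v w = \<mu> \<cdot>\<^sub>v w"
    unfolding eigenvalue_def eigenvector_def by auto
  define x where "x u = w $ g u" for u
  have w_eq: "w = vec n (\<lambda>j. x (f j))"
    using w(1) g_f by (auto simp: x_def)
  obtain j where j: "j < n" "w $ j \<noteq> 0"
  proof (rule ccontr)
    assume "\<not> thesis"
    then have "w = 0\<^sub>v n"
      using that w(1) by (intro eq_vecI) auto
    with w(2) show False ..
  qed
  have "(\<Sum>v\<in>V. M u v * x v) = \<mu> * x u" if u: "u \<in> V" for u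
  proof -
    have "(\<Sum>v\<in>V. M u v * x v) = (?A *\<^sub>v w) $ g u"
      using mat_mult_vec_reindex[OF f g_in(1)[OF u], of M x] g_in(2)[OF u] w_eq by simp
    also have "\<dots> = \<mu> * x u"
      using w(1,3) g_in(1)[OF u] by (simp add: x_def)
    finally show ?thesis .
  qed
  moreover have "f j \<in> V" "x (f j) \<noteq> 0"
    using f j g_f by (auto simp: x_def bij_betw_def)
  ultimately show ?thesis
    using that by blast
qed

lemma finite_eigenvalues:
  assumes "finite V"
  shows "finite {\<mu>. is_eigenvalue V M \<mu>}"
proof -
  obtain f where f: "bij_betw f {0..<card V} V"
    using ex_bij_betw_nat_finite[OF assms] by blast
  let ?A = "mat (card V) (card V) (\<lambda>(i, j). M (f i) (f j))"
  have "{\<mu>. is_eigenvalue V M \<mu>} \<subseteq> spectrum ?A"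
    unfolding is_eigenvalue_def spectrum_def using eigenvector_imp_mat_eigenvalue[OF f] by blast
  then show ?thesis
    using card_finite_spectrum(1)[of ?A "card V"] finite_subset by auto
qed

lemma is_eigenvalue_of_complex_eigenvector:
  fixes M :: "'a \<Rightarrow> 'a \<Rightarrow> real" and x :: "'a \<Rightarrow> complex"
  assumes eig: "\<And>u. u \<in> V \<Longrightarrow> (\<Sum>v\<in>V. of_real (M u v) * x v) = of_real \<mu> * x u"
    and nz: "u0 \<in> V" "x u0 \<noteq> 0"
  shows "is_eigenvalue V M \<mu>"
proof -
  have re: "(\<Sum>v\<in>V. M u v * Re (x v)) = \<mu> * Re (x u)"
    and im: "(\<Sum>v\<in>V. M u v * Im (x v)) = \<mu> * Im (x u)" if "u \<in> V" for u
    using arg_cong[OF eig[OF that], of Re] arg_cong[OF eig[OF that], of Im]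
    by (simp_all add: Re_sum Im_sum)
  show ?thesis
  proof (cases "Re (x u0) = 0")
    case True
    with nz have "Im (x u0) \<noteq> 0" by (simp add: complex_eq_iff)
    then show ?thesis
      unfolding is_eigenvalue_def using nz(1) im by (intro exI[of _ "\<lambda>v. Im (x v)"]) auto
  next
    case False
    then show ?thesis
      unfolding is_eigenvalue_def using nz(1) re by (intro exI[of _ "\<lambda>v. Re (x v)"]) auto
  qed
qed

lemma symmetric_has_eigenvalue:
  fixes M :: "'a \<Rightarrow> 'a \<Rightarrow> real"
  assumes "finite V" "V \<noteq> {}" and sym: "\<And>u v. M u v = M v u"
  shows "\<exists>\<mu>. is_eigenvalue V M \<mu>"
proof -
  obtain f where f: "bij_betw f {0..<card V} V"
    using ex_bij_betw_nat_finite[OF assms(1)] by blast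
  let ?A = "mat (card V) (card V) (\<lambda>(i, j). complex_of_real (M (f i) (f j)))"
  have "spectrum ?A \<noteq> {}"
    using assms(1,2) by (intro spectrum_non_empty[of _ "card V"]) (auto simp: card_gt_0_iff)
  then obtain \<mu> where "eigenvalue ?A \<mu>"
    unfolding spectrum_def by auto
  then obtain x u0 where nz: "u0 \<in> V" "x u0 \<noteq> 0"
    and eig: "\<And>u. u \<in> V \<Longrightarrow> (\<Sum>v\<in>V. of_real (M u v) * x v) = \<mu> * x u"
    using mat_eigenvalue_imp_eigenvector[OF f, where M = "\<lambda>u v. complex_of_real (M u v)"] by blast
  have "Im \<mu> = 0"
    using symmetric_form_eigenvalue_real[OF assms(1) sym eig nz] .
  then obtain r where "\<mu> = of_real r"
    by (metis complex_is_Real_iff Reals_cases)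
  then show ?thesis
    using is_eigenvalue_of_complex_eigenvector[of V M x r u0] eig nz by blast
qed

section \<open>Degrees and edges\<close>

definition neighbours :: "'a set \<Rightarrow> ('a \<Rightarrow> 'a \<Rightarrow> bool) \<Rightarrow> 'a \<Rightarrow> 'a set" where
  "neighbours V E u = {v \<in> V. E u v}"

lemma degree_eq_card_neighbours: "Defs.degree V E u = card (neighbours V E u)"
  by (simp add: degree_def neighbours_def)

lemma finite_neighbours: "simple_graph V E \<Longrightarrow> finite (neighbours V E u)"
  by (simp add: simple_graph_def neighbours_def)

lemma degree_pos_if_adjacent:
  assumes "simple_graph V E" "E u v"
  shows "0 < Defs.degree V E v"
proof -
  have "u \<in> neighbours V E v"
    using assms by (auto simp: simple_graph_def neighbours_def)
  then show ?thesis
    using finite_neighbours[OF assms(1)] by (auto simp: degree_eq_card_neighbours card_gt_0_iff)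
qed

lemma degree_pos_if_connected:
  assumes "simple_graph V E" "connected_graph V E" "2 \<le> card V" "u \<in> V"
  shows "0 < Defs.degree V E u"
proof -
  have "finite V"
    using assms(1) by (simp add: simple_graph_def)
  then obtain v where v: "v \<in> V" "v \<noteq> u"
    using assms(3,4) by (metis card_le_Suc0_iff_eq not_less_eq_eq numeral_2_eq_2 One_nat_def)
  have "E\<^sup>*\<^sup>* v u"
    using assms(2) assms(4) v(1) unfolding connected_graph_def by blast
  then obtain y where "E y u"
    using v(2) by (metis rtranclp.cases)
  then show ?thesis
    using degree_pos_if_adjacent[OF assms(1)] by blast
qed

lemma degree_le_max_degree: "finite V \<Longrightarrow> u \<in> V \<Longrightarrow> Defs.degree V E u \<le> max_degree V E"
  by (simp add: max_degree_def)

lemma max_degree_attained: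
  assumes "finite V" "V \<noteq> {}"
  obtains w where "w \<in> V" "Defs.degree V E w = max_degree V E"
proof -
  have "max_degree V E \<in> Defs.degree V E ` V"
    unfolding max_degree_def using assms by (intro Max_in) auto
  then show ?thesis
    using that by auto
qed

lemma sum_neighbours_eq_twice_sum_edges:
  fixes g :: "'a set \<Rightarrow> 'b::comm_semiring_1"
  assumes sg: "simple_graph V E"
  shows "(\<Sum>u\<in>V. \<Sum>v\<in>neighbours V E u. g {u, v}) = 2 * (\<Sum>e\<in>edge_set V E. g e)"
proof -
  have fin: "finite V" and sym: "\<And>u v. E u v \<Longrightarrow> E v u" and irr: "\<And>u. \<not> E u u"
    using sg unfolding simple_graph_def by auto
  define P where "P = Sigma V (neighbours V E)"
  define h where "h p = {fst p, snd p}" for p :: "'a \<times> 'a"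
  have "(\<Sum>u\<in>V. \<Sum>v\<in>neighbours V E u. g {u, v}) = (\<Sum>p\<in>P. g (h p))"
    unfolding P_def h_def using fin finite_neighbours[OF sg] by (subst sum.Sigma) (auto simp: case_prod_beta)
  also have "\<dots> = (\<Sum>e\<in>h ` P. \<Sum>p\<in>{p\<in>P. h p = e}. g (h p))"
    using fin finite_neighbours[OF sg] unfolding P_def by (intro sum.image_gen) auto
  also have "\<dots> = (\<Sum>e\<in>edge_set V E. 2 * g e)"
  proof (rule sum.cong)
    show "h ` P = edge_set V E"
      unfolding P_def h_def edge_set_def neighbours_def by (auto simp: image_iff) blast+
  next
    fix e assume "e \<in> edge_set V E"
    then obtain a b where ab: "a \<in> V" "b \<in> V" "E a b" "e = {a, b}"
      unfolding edge_set_def by blast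
    then have "a \<noteq> b" using irr by blast
    moreover have "{p\<in>P. h p = e} = {(a, b), (b, a)}"
      using ab sym unfolding P_def h_def neighbours_def by (auto simp: doubleton_eq_iff)
    ultimately show "(\<Sum>p\<in>{p\<in>P. h p = e}. g (h p)) = 2 * g e"
      using ab(4) by (simp add: h_def insert_commute mult_2)
  qed
  also have "\<dots> = 2 * (\<Sum>e\<in>edge_set V E. g e)"
    by (simp add: sum_distrib_left)
  finally show ?thesis .
qed

lemma sum_degree_eq_twice_num_edges:
  assumes "simple_graph V E"
  shows "(\<Sum>u\<in>V. Defs.degree V E u) = 2 * num_edges V E"
  using sum_neighbours_eq_twice_sum_edges[OF assms, of "\<lambda>_. 1 :: nat"]
  by (simp add: degree_eq_card_neighbours num_edges_def)

lemma twice_randic_eq: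
  assumes sg: "simple_graph V E"
  shows "2 * randic V E = (\<Sum>u\<in>V. \<Sum>v\<in>neighbours V E u.
           1 / sqrt (real (Defs.degree V E u) * real (Defs.degree V E v)))"
proof -
  have "u \<noteq> v" if "v \<in> neighbours V E u" for u v
    using sg that by (auto simp: simple_graph_def neighbours_def)
  then show ?thesis
    unfolding randic_def sum_neighbours_eq_twice_sum_edges[OF sg, symmetric]
    by (intro sum.cong refl) simp
qed

section \<open>The signless Laplacian\<close>

lemma sum_signless_laplacian_mult:
  assumes "finite V" "u \<in> V"
  shows "(\<Sum>v\<in>V. signless_laplacian V E u v * x v)
           = real (Defs.degree V E u) * x u + (\<Sum>v\<in>neighbours V E u. x v)"
proof -
  have "(\<Sum>v\<in>V. signless_laplacian V E u v * x v)
      = (\<Sum>v\<in>V. (if u = v then real (Defs.degree V E u) * x v else 0) + (if E u v then x v else 0))"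
    by (intro sum.cong) (auto simp: signless_laplacian_def algebra_simps)
  also have "\<dots> = real (Defs.degree V E u) * x u + (\<Sum>v\<in>neighbours V E u. x v)"
    using assms by (simp add: sum.distrib neighbours_def sum.inter_filter)
  finally show ?thesis .
qed

lemma signless_laplacian_eigenvector_bound:
  fixes Y :: real
  assumes fin: "finite V" and u: "u \<in> V"
    and eq: "(\<Sum>v\<in>V. signless_laplacian V E u v * x v) = \<mu> * x u"
    and x_le: "\<And>v. v \<in> V \<Longrightarrow> \<bar>x v\<bar> \<le> real (Defs.degree V E v) * Y"
    and x_u: "\<bar>x u\<bar> = real (Defs.degree V E u) * Y"
  shows "\<bar>\<mu>\<bar> * (real (Defs.degree V E u) * Y)
           \<le> ((real (Defs.degree V E u))\<^sup>2 + (\<Sum>v\<in>neighbours V E u. real (Defs.degree V E v))) * Y"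
proof -
  let ?d = "\<lambda>v. real (Defs.degree V E v)" and ?N = "neighbours V E u"
  have "(\<Sum>v\<in>?N. \<bar>x v\<bar>) \<le> (\<Sum>v\<in>?N. ?d v * Y)"
    using x_le by (intro sum_mono) (simp add: neighbours_def)
  then have "\<bar>\<Sum>v\<in>?N. x v\<bar> \<le> (\<Sum>v\<in>?N. ?d v * Y)"
    using sum_abs[of x ?N] by linarith
  moreover have "\<bar>\<mu>\<bar> * (?d u * Y) = \<bar>?d u * x u + (\<Sum>v\<in>?N. x v)\<bar>"
    using eq sum_signless_laplacian_mult[OF fin u] x_u by (simp add: abs_mult)
  ultimately have "\<bar>\<mu>\<bar> * (?d u * Y) \<le> ?d u * (?d u * Y) + (\<Sum>v\<in>?N. ?d v * Y)"
    using abs_triangle_ineq[of "?d u * x u" "\<Sum>v\<in>?N. x v"] x_u by (simp add: abs_mult)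
  then show ?thesis
    by (simp add: power2_eq_square distrib_right sum_distrib_right mult.assoc)
qed

lemma signless_laplacian_eigenvalue_le:
  fixes B :: real
  assumes sg: "simple_graph V E"
    and deg_pos: "\<And>u. u \<in> V \<Longrightarrow> 0 < Defs.degree V E u"
    and bound: "\<And>u. u \<in> V \<Longrightarrow> (real (Defs.degree V E u))\<^sup>2
                  + (\<Sum>v\<in>neighbours V E u. real (Defs.degree V E v)) \<le> B * real (Defs.degree V E u)"
    and eig: "is_eigenvalue V (signless_laplacian V E) \<mu>"
  shows "\<mu> \<le> B"
proof -
  define d where "d u = real (Defs.degree V E u)" for u
  have fin: "finite V"
    using sg by (simp add: simple_graph_def)
  have d_pos: "0 < d u" if "u \<in> V" for u
    using deg_pos[OF that] by (simp add: d_def)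
  from eig obtain x u0 where u0: "u0 \<in> V" "x u0 \<noteq> 0"
    and eq: "\<And>u. u \<in> V \<Longrightarrow> (\<Sum>v\<in>V. signless_laplacian V E u v * x v) = \<mu> * x u"
    unfolding is_eigenvalue_def by blast
  \<comment> \<open>Look at a vertex where the rescaled eigenvector \<open>D\<^sup>-\<^sup>1 x\<close> is largest in absolute value.\<close>
  define Y where "Y = Max ((\<lambda>v. \<bar>x v\<bar> / d v) ` V)"
  have "Y \<in> (\<lambda>v. \<bar>x v\<bar> / d v) ` V"
    unfolding Y_def using fin u0(1) by (intro Max_in) auto
  then obtain u where u: "u \<in> V" "\<bar>x u\<bar> / d u = Y"
    by blast
  have ratio_le: "\<bar>x v\<bar> / d v \<le> Y" if "v \<in> V" for v
    unfolding Y_def using fin that by (intro Max_ge) auto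
  have "0 < \<bar>x u0\<bar> / d u0"
    using u0 d_pos[OF u0(1)] by simp
  then have Y_pos: "0 < Y"
    using ratio_le[OF u0(1)] by linarith
  have "\<bar>\<mu>\<bar> * (d u * Y) \<le> ((d u)\<^sup>2 + (\<Sum>v\<in>neighbours V E u. d v)) * Y"
    unfolding d_def
  proof (rule signless_laplacian_eigenvector_bound[OF fin u(1) eq[OF u(1)]])
    show "\<bar>x v\<bar> \<le> real (Defs.degree V E v) * Y" if "v \<in> V" for v
      using ratio_le[OF that] d_pos[OF that] by (simp add: d_def pos_divide_le_eq mult.commute)
    show "\<bar>x u\<bar> = real (Defs.degree V E u) * Y"
      using u d_pos[OF u(1)] by (simp add: d_def field_simps)
  qed
  also have "\<dots> \<le> B * (d u * Y)"
    using bound[OF u(1)] Y_pos unfolding d_def by (simp add: mult_right_mono mult.assoc)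
  finally have "\<bar>\<mu>\<bar> \<le> B"
    using d_pos[OF u(1)] Y_pos by simp
  then show ?thesis
    by linarith
qed

lemma signless_spectral_radius_le:
  fixes B :: real
  assumes sg: "simple_graph V E" and "V \<noteq> {}"
    and deg_pos: "\<And>u. u \<in> V \<Longrightarrow> 0 < Defs.degree V E u"
    and bound: "\<And>u. u \<in> V \<Longrightarrow> (real (Defs.degree V E u))\<^sup>2
                  + (\<Sum>v\<in>neighbours V E u. real (Defs.degree V E v)) \<le> B * real (Defs.degree V E u)"
  shows "signless_spectral_radius V E \<le> B"
proof -
  have fin: "finite V"
    using sg by (simp add: simple_graph_def)
  have "signless_laplacian V E u v = signless_laplacian V E v u" for u v
    using sg by (auto simp: simple_graph_def signless_laplacian_def)
  then have "\<exists>\<mu>. is_eigenvalue V (signless_laplacian V E) \<mu>"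
    using symmetric_has_eigenvalue[OF fin \<open>V \<noteq> {}\<close>] by blast
  then show ?thesis
    unfolding signless_spectral_radius_def
    using finite_eigenvalues[OF fin] signless_laplacian_eigenvalue_le[OF sg deg_pos bound]
    by (simp add: Max_le_iff)
qed

lemma sum_neighbour_degrees_le:
  assumes sg: "simple_graph V E" and deg_pos: "\<And>u. u \<in> V \<Longrightarrow> 0 < Defs.degree V E u"
    and u: "u \<in> V"
  shows "(\<Sum>v\<in>neighbours V E u. Defs.degree V E v) + card V \<le> 2 * num_edges V E + 1"
proof -
  let ?d = "Defs.degree V E" and ?N = "neighbours V E u"
  define R where "R = V - insert u ?N"
  have fin: "finite V"
    using sg by (simp add: simple_graph_def)
  have sub: "insert u ?N \<subseteq> V"
    using u by (auto simp: neighbours_def)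
  have u_notin: "u \<notin> ?N"
    using sg by (simp add: simple_graph_def neighbours_def)
  have "card V = card R + card (insert u ?N)"
    unfolding R_def using fin sub by (metis card_Diff_subset card_mono finite_subset le_add_diff_inverse2)
  also have "card (insert u ?N) = ?d u + 1"
    using finite_neighbours[OF sg] u_notin by (simp add: degree_eq_card_neighbours)
  finally have card_V: "card V = card R + ?d u + 1" by simp
  have "card R \<le> sum ?d R"
    using sum_bounded_below[of R 1 ?d] deg_pos unfolding R_def by (simp add: Suc_le_eq)
  moreover have "2 * num_edges V E = sum ?d R + ?d u + sum ?d ?N"
    using sum_degree_eq_twice_num_edges[OF sg] sum.subset_diff[OF sub fin, of ?d]
      finite_neighbours[OF sg] u_notin unfolding R_def by simp
  ultimately show ?thesis
    using card_V by linarith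
qed

lemma degree_sq_add_sum_neighbour_degrees_le:
  fixes c :: nat
  assumes sg: "simple_graph V E" and deg_pos: "\<And>u. u \<in> V \<Longrightarrow> 0 < Defs.degree V E u"
    and u: "u \<in> V"
    and gap: "c + max_degree V E \<le> card V"
    and excess: "c * c + 2 * num_edges V E + 1 \<le> (c + 1) * card V"
  shows "(Defs.degree V E u)\<^sup>2 + (\<Sum>v\<in>neighbours V E u. Defs.degree V E v) \<le> card V * Defs.degree V E u"
proof -
  let ?d = "Defs.degree V E" and ?N = "neighbours V E u" and ?\<Delta> = "max_degree V E"
  have fin: "finite V"
    using sg by (simp add: simple_graph_def)
  show ?thesis
  proof (cases "?d u + ?\<Delta> \<le> card V")
    case True
    have "(\<Sum>v\<in>?N. ?d v) \<le> ?d u * ?\<Delta>"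
      using sum_bounded_above[of ?N ?d ?\<Delta>] degree_le_max_degree[OF fin]
      by (auto simp: neighbours_def degree_eq_card_neighbours)
    moreover have "?d u * (?d u + ?\<Delta>) \<le> ?d u * card V"
      using True by simp
    ultimately show ?thesis
      by (simp add: power2_eq_square algebra_simps)
  next
    case False
    \<comment> \<open>Here \<open>c \<le> d(u) \<le> n - c\<close>, hence \<open>d(u) (n - d(u)) \<ge> c (n - c)\<close>.\<close>
    define D N C S where "D = int (?d u)" and "N = int (card V)" and "C = int c"
      and "S = int (\<Sum>v\<in>?N. ?d v)"
    have "c \<le> ?d u" "?d u + c \<le> card V"
      using False gap degree_le_max_degree[OF fin u, where E=E] by linarith+
    then have "C \<le> D" "D + C \<le> N"
      unfolding C_def D_def N_def by simp_all
    then have "0 \<le> (D - C) * (N - C - D)"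
      by simp
    moreover have "(D - C) * (N - C - D) = D * N + C * C - D * D - C * N"
      by (simp add: algebra_simps)
    moreover have "S + N \<le> 2 * int (num_edges V E) + 1"
      using sum_neighbour_degrees_le[OF sg deg_pos u] unfolding S_def N_def by linarith
    moreover have "C * C + 2 * int (num_edges V E) + 1 \<le> (C + 1) * N"
      using excess unfolding C_def N_def by (simp flip: of_nat_le_iff[where 'a=int] add: algebra_simps)
    ultimately have "D * D + S \<le> N * D"
      by (simp add: algebra_simps)
    then show ?thesis
      unfolding D_def S_def N_def by (simp flip: of_nat_le_iff[where 'a=int] add: power2_eq_square)
  qed
qed

lemma edge_excess_gap:
  fixes n \<Delta> m :: nat
  assumes "13 \<le> n"
    and "(\<Delta> \<le> n - 4 \<and> m \<le> n + 10) \<or> (\<Delta> = n - 3 \<and> m \<le> n + 7) \<or> (\<Delta> = n - 2 \<and> m \<le> n + 4)"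
  obtains c where "2 \<le> c" "c + \<Delta> \<le> n" "c * c + 2 * m + 1 \<le> (c + 1) * n"
  using assms(2)
proof (elim disjE conjE)
  assume "\<Delta> \<le> n - 4" "m \<le> n + 10"
  then show thesis
    using assms(1) by (intro that[of 4]) auto
next
  assume "\<Delta> = n - 3" "m \<le> n + 7"
  then show thesis
    using assms(1) by (intro that[of 3]) auto
next
  assume "\<Delta> = n - 2" "m \<le> n + 4"
  then show thesis
    using assms(1) by (intro that[of 2]) auto
qed

lemma signless_spectral_radius_le_card:
  fixes c :: nat
  assumes sg: "simple_graph V E" and "V \<noteq> {}"
    and deg_pos: "\<And>u. u \<in> V \<Longrightarrow> 0 < Defs.degree V E u"
    and gap: "c + max_degree V E \<le> card V"
    and excess: "c * c + 2 * num_edges V E + 1 \<le> (c + 1) * card V"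
  shows "signless_spectral_radius V E \<le> real (card V)"
proof (rule signless_spectral_radius_le[OF sg \<open>V \<noteq> {}\<close> deg_pos])
  fix u assume "u \<in> V"
  from degree_sq_add_sum_neighbour_degrees_le[OF sg deg_pos this gap excess]
  show "(real (Defs.degree V E u))\<^sup>2 + (\<Sum>v\<in>neighbours V E u. real (Defs.degree V E v))
          \<le> real (card V) * real (Defs.degree V E u)"
    by (simp flip: of_nat_le_iff[where 'a=real])
qed

section \<open>The Randic index\<close>

lemma sqrt_degree_div_le_sum_neighbours:
  assumes sg: "simple_graph V E" and u: "u \<in> V"
  shows "sqrt (real (Defs.degree V E u)) / sqrt (real (max_degree V E))
           \<le> (\<Sum>v\<in>neighbours V E u. 1 / sqrt (real (Defs.degree V E u) * real (Defs.degree V E v)))"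
proof -
  let ?d = "\<lambda>v. real (Defs.degree V E v)" and ?\<Delta> = "real (max_degree V E)"
  have fin: "finite V"
    using sg by (simp add: simple_graph_def)
  have "sqrt (?d u) / sqrt ?\<Delta> = ?d u / (sqrt (?d u) * sqrt ?\<Delta>)"
    by (simp add: divide_divide_eq_left[symmetric] real_div_sqrt)
  also have "\<dots> = (\<Sum>v\<in>neighbours V E u. 1 / sqrt (?d u * ?\<Delta>))"
    by (simp add: degree_eq_card_neighbours real_sqrt_mult)
  also have "\<dots> \<le> (\<Sum>v\<in>neighbours V E u. 1 / sqrt (?d u * ?d v))"
  proof (rule sum_mono)
    fix v assume v: "v \<in> neighbours V E u"
    then have "0 < ?d u" "0 < ?d v" "?d v \<le> ?\<Delta>"
      using finite_neighbours[OF sg] degree_pos_if_adjacent[OF sg] degree_le_max_degree[OF fin]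
      by (auto simp: neighbours_def degree_eq_card_neighbours card_gt_0_iff)
    then show "1 / sqrt (?d u * ?\<Delta>) \<le> 1 / sqrt (?d u * ?d v)"
      by (intro divide_left_mono real_sqrt_le_mono mult_left_mono mult_pos_pos) auto
  qed
  finally show ?thesis .
qed


lemma two_mult_sqrt_less_add:
  fixes a b :: real
  assumes "0 \<le> a" "0 \<le> b" "a \<noteq> b"
  shows "2 * (sqrt a * sqrt b) < a + b"
proof -
  have "sqrt a \<noteq> sqrt b"
    using assms by simp
  then have "0 < (sqrt a - sqrt b)\<^sup>2"
    by simp
  then show ?thesis
    using assms by (simp add: power2_diff)
qed

lemma one_add_of_bool_div_le:
  fixes a s :: real
  assumes "1 \<le> a" "0 < s"
  shows "(1 + of_bool P) / s \<le> a / s + of_bool P / (s * a)"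
proof (cases P)
  case True
  have "2 * a \<le> a * a + 1"
    using power2_diff[of a 1] zero_le_power2[of "a - 1"] by (simp add: power2_eq_square)
  then show ?thesis
    using True assms by (simp add: field_simps)
next
  case False
  then show ?thesis
    using assms by (simp add: divide_right_mono)
qed

lemma randic_lower_bound:
  assumes sg: "simple_graph V E" and deg_pos: "\<And>u. u \<in> V \<Longrightarrow> 0 < Defs.degree V E u"
    and w: "w \<in> V" "Defs.degree V E w = max_degree V E"
  shows "(real (card V) - 1 + real (max_degree V E)) / sqrt (real (max_degree V E)) \<le> 2 * randic V E"
proof -
  let ?d = "\<lambda>v. real (Defs.degree V E v)" and ?\<Delta> = "real (max_degree V E)"
  define s where "s = sqrt ?\<Delta>"
  define r where "r u = (\<Sum>v\<in>neighbours V E u. 1 / sqrt (?d u * ?d v))" for u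
  \<comment> \<open>The weight of an edge \<open>wu\<close> counted at \<open>w\<close> is moved over to \<open>u\<close>.\<close>
  define extra where "extra u = of_bool (E w u) / (s * sqrt (?d u))" for u
  have fin: "finite V"
    using sg by (simp add: simple_graph_def)
  have neighbours_w: "neighbours V E w = (V - {w}) \<inter> {u. E w u}"
    using sg by (auto simp: simple_graph_def neighbours_def)
  have s_pos: "0 < s"
    using deg_pos[OF w(1)] w(2) by (simp add: s_def)
  have "(real (card V) - 1 + ?\<Delta>) / s
      = (real (card (V - {w})) + real (card ((V - {w}) \<inter> {u. E w u}))) / s"
    using card.remove[OF fin w(1)] w(2) by (simp add: neighbours_w[symmetric] degree_eq_card_neighbours)
  also have "\<dots> = (\<Sum>u\<in>V - {w}. (1 + of_bool (E w u)) / s)"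
    using fin by (simp add: sum_divide_distrib[symmetric] sum.distrib)
  also have "\<dots> \<le> (\<Sum>u\<in>V - {w}. r u + extra u)"
  proof (rule sum_mono)
    fix u assume u: "u \<in> V - {w}"
    have "1 \<le> sqrt (?d u)"
      using deg_pos[of u] u by (simp add: Suc_le_eq)
    then have "(1 + of_bool (E w u)) / s \<le> sqrt (?d u) / s + extra u"
      unfolding extra_def by (rule one_add_of_bool_div_le[OF _ s_pos])
    moreover have "sqrt (?d u) / s \<le> r u"
      using sqrt_degree_div_le_sum_neighbours[OF sg] u by (simp add: s_def r_def)
    ultimately show "(1 + of_bool (E w u)) / s \<le> r u + extra u"
      by linarith
  qed
  also have "\<dots> = (\<Sum>u\<in>V. r u)"
  proof -
    have "r w = (\<Sum>u\<in>V - {w}. extra u)"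
      unfolding r_def extra_def s_def w(2) neighbours_w
      using fin by (simp add: sum.inter_restrict real_sqrt_mult) (rule sum.cong; simp)
    then show ?thesis
      using fin w(1) by (simp add: sum.distrib sum.remove)
  qed
  also have "\<dots> = 2 * randic V E"
    unfolding r_def twice_randic_eq[OF sg] ..
  finally show ?thesis
    unfolding s_def .
qed

lemma sqrt_lt_randic:
  assumes sg: "simple_graph V E" and deg_pos: "\<And>u. u \<in> V \<Longrightarrow> 0 < Defs.degree V E u"
    and "V \<noteq> {}" and gap: "max_degree V E + 2 \<le> card V"
  shows "sqrt (real (card V) - 1) < randic V E"
proof -
  let ?n = "real (card V)" and ?\<Delta> = "real (max_degree V E)"
  have fin: "finite V"
    using sg by (simp add: simple_graph_def)
  obtain w where w: "w \<in> V" "Defs.degree V E w = max_degree V E"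
    using max_degree_attained[OF fin \<open>V \<noteq> {}\<close>] .
  have "0 < ?\<Delta>"
    using deg_pos[OF w(1)] w(2) by simp
  moreover have "2 * (sqrt (?n - 1) * sqrt ?\<Delta>) < ?n - 1 + ?\<Delta>"
    using gap by (intro two_mult_sqrt_less_add) auto
  ultimately have "2 * sqrt (?n - 1) < (?n - 1 + ?\<Delta>) / sqrt ?\<Delta>"
    by (simp add: pos_less_divide_eq mult.assoc)
  then show ?thesis
    using randic_lower_bound[OF sg deg_pos w] by linarith
qed

theorem lemma3p5:
  fixes V :: "'a set" and E :: "'a \<Rightarrow> 'a \<Rightarrow> bool" and n \<Delta> :: nat
  assumes "simple_graph V E" and "connected_graph V E"
    and "n = card V" and "n \<ge> 13"
    and "\<Delta> = max_degree V E"
    and "(real n / 2 \<le> real \<Delta> \<and> \<Delta> \<le> n - 4 \<and> (\<exists>k. 1 \<le> k \<and> k \<le> 10 \<and> num_edges V E = n + k))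
       \<or> (\<Delta> = n - 3 \<and> (\<exists>k. 1 \<le> k \<and> k \<le> 7 \<and> num_edges V E = n + k))
       \<or> (\<Delta> = n - 2 \<and> (\<exists>k. 1 \<le> k \<and> k \<le> 4 \<and> num_edges V E = n + k))"
  shows "signless_spectral_radius V E / randic V E < real n / sqrt (real n - 1)"
proof -
  have "V \<noteq> {}"
    using assms(3,4) by auto
  have deg_pos: "\<And>u. u \<in> V \<Longrightarrow> 0 < Defs.degree V E u"
    using degree_pos_if_connected[OF assms(1,2)] assms(3,4) by simp
  have "(\<Delta> \<le> n - 4 \<and> num_edges V E \<le> n + 10) \<or> (\<Delta> = n - 3 \<and> num_edges V E \<le> n + 7)
      \<or> (\<Delta> = n - 2 \<and> num_edges V E \<le> n + 4)"
    using assms(6) by auto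
  then obtain c where c: "2 \<le> c" "c + \<Delta> \<le> n" "c * c + 2 * num_edges V E + 1 \<le> (c + 1) * n"
    using edge_excess_gap assms(4) by blast
  have q: "signless_spectral_radius V E \<le> real n"
    using signless_spectral_radius_le_card[OF assms(1) \<open>V \<noteq> {}\<close> deg_pos] c assms(3,5) by simp
  have R: "sqrt (real n - 1) < randic V E"
    using sqrt_lt_randic[OF assms(1) deg_pos \<open>V \<noteq> {}\<close>] c assms(3,5) by simp
  have "0 < sqrt (real n - 1)"
    using assms(4) by simp
  with R have R_pos: "0 < randic V E"
    by linarith
  with q have "signless_spectral_radius V E / randic V E \<le> real n / randic V E"
    by (intro divide_right_mono) auto
  also have "\<dots> < real n / sqrt (real n - 1)"
    using R_pos \<open>0 < sqrt (real n - 1)\<close> by (intro divide_strict_left_mono[OF R] mult_pos_pos) auto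
  finally show ?thesis .
qed

end
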